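(* For all $\mu_1,\mu_2\in X$, we have $\mu_1\oplus_s\mu_2\subseteq\mu_1\oplus\mu_2\subseteq\mu_1\oplus_w\mu_2$.
   Context: Fix a set $\mathrm{Var}$ of variables; values are real numbers. For finite $S\subseteq\mathrm{Var}$, $\mathrm{Mem}[S]$ is the set of maps $S\to\mathbb{R}$, ordered pointwise; $p_A(m)$ is restriction to $A$. $\mathcal{D}(Y)$ is the set of countably supported probability distributions on $Y$; for $\mu\in\mathcal{D}(\mathrm{Mem}[S])$, $\mathrm{dom}(\mu)=S$ and $\pi_A\mu$ is the marginal on $A\subseteq S$. Let $X=\bigcup_{S\subseteq\mathrm{Var}\text{ finite}}\mathcal{D}(\mathrm{Mem}[S])$. Monotone = non-decreasing, antitone = non-increasing. A partition is a set of pairwise disjoint nonempty sets; $\mathcal{T}$ coarsens $\mathcal{S}$ if $\bigcup\mathcal{T}=\bigcup\mathcal{S}$ and each element of $\mathcal{T}$ is a union of a subfamily of $\mathcal{S}$. For a partition $\mathcal{S}$ with $\bigcup\mathcal{S}\subseteq\mathrm{dom}(\mu)$, $\mu$ is $\mathcal{S}$-PNA if for every $\mathcal{T}$ coarsening $\mathcal{S}$ and every family $(f_A:\mathrm{Mem}[A]\to[0,\infty))_{A\in\mathcal{T}}$ all monotone or all antitone, $\mathbb{E}_{m\sim\mu}[\prod_Af_A(p_Am)]\le\prod_A\mathbb{E}_{m\sim\mu}[f_A(p_Am)]$. For disjoint $A,B\subseteq\mathrm{dom}(\mu)$, $\mu$ is $(A,B)$-NA if for all $f:\mathrm{Mem}[A]\to\mathbb{R}$,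 $g:\mathrm{Mem}[B]\to\mathbb{R}$ both monotone or both antitone, each bounded below or bounded above, $\mathbb{E}[f(p_Am)g(p_Bm)]\le\mathbb{E}[f(p_Am)]\mathbb{E}[g(p_Bm)]$; $\mu$ satisfies strong NA if it is $(A,B)$-NA for all disjoint $A,B\subseteq\mathrm{dom}(\mu)$. For $\mu_1\in\mathcal{D}(\mathrm{Mem}[S])$, $\mu_2\in\mathcal{D}(\mathrm{Mem}[T])$: $\mu_1\oplus_s\mu_2$ is the set of $\mu\in\mathcal{D}(\mathrm{Mem}[S\cup T])$ satisfying strong NA with $\pi_S\mu=\mu_1$, $\pi_T\mu=\mu_2$, and $S\cap T=\emptyset$; $\mu_1\oplus_w\mu_2$ is the set of $\mu\in\mathcal{D}(\mathrm{Mem}[S\cup T])$ that are $(S,T)$-NA with $\pi_S\mu=\mu_1$, $\pi_T\mu=\mu_2$, $S\cap T=\emptyset$; and $\mu_1\oplus\mu_2$ is empty if $S\cap T\ne\emptyset$ and otherwise is the set of $\mu\in\mathcal{D}(\mathrm{Mem}[S\cup T])$ with $\pi_S\mu=\mu_1$, $\pi_T\mu=\mu_2$, such that $\mu$ is $(\mathcal{S}\cup\mathcal{T})$-PNA for all partitions $\mathcal{S}$ (of a subset of $S$) and $\mathcal{T}$ (of a subset of $T$) with $\mu_1$ $\mathcal{S}$-PNA and $\mu_2$ $\mathcal{T}$-PNA. *)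

theory Defs
  imports "HOL-Probability.Probability"
begin

text \<open>A memory on a finite set S of
variables is represented as a total function 'v => real which is 0 outside S;
Mem S is the set of such functions.  The order on memories is the pointwise order
(le_fun), which on Mem S coincides with the pointwise order on S.\<close>

definition Mem :: "'v set \<Rightarrow> ('v \<Rightarrow> real) set" where
  "Mem S = {m. \<forall>x. x \<notin> S \<longrightarrow> m x = 0}"

definition restr :: "'v set \<Rightarrow> ('v \<Rightarrow> real) \<Rightarrow> ('v \<Rightarrow> real)" where
  "restr A m = (\<lambda>x. if x \<in> A then m x else 0)"

text \<open>mu is a countably supported distribution on Mem[S] (S finite), i.e. dom(mu) = S.\<close>
definition is_dist :: "'v set \<Rightarrow> ('v \<Rightarrow> real) pmf \<Rightarrow> bool" where
  "is_dist S \<mu> \<longleftrightarrow> finite S \<and> set_pmf \<mu> \<subseteq> Mem S"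

definition marg :: "'v set \<Rightarrow> ('v \<Rightarrow> real) pmf \<Rightarrow> ('v \<Rightarrow> real) pmf" where
  "marg A \<mu> = map_pmf (restr A) \<mu>"

definition antimono_on' :: "('v \<Rightarrow> real) set \<Rightarrow> (('v \<Rightarrow> real) \<Rightarrow> real) \<Rightarrow> bool" where
  "antimono_on' D f \<longleftrightarrow> monotone_on D (\<le>) (\<ge>) f"

definition is_partition :: "'v set set \<Rightarrow> bool" where
  "is_partition P \<longleftrightarrow> (\<forall>A\<in>P. A \<noteq> {}) \<and> (\<forall>A\<in>P. \<forall>B\<in>P. A \<noteq> B \<longrightarrow> A \<inter> B = {})"

definition coarsens :: "'v set set \<Rightarrow> 'v set set \<Rightarrow> bool" where
  "coarsens T P \<longleftrightarrow> \<Union>T = \<Union>P \<and> (\<forall>A\<in>T. \<exists>Q\<subseteq>P. A = \<Union>Q)"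

text \<open>P-PNA for mu with dom(mu) = S.  Expectations of nonnegative functions are
taken as nonnegative (possibly infinite) integrals in ennreal.\<close>
definition PNA :: "'v set \<Rightarrow> ('v \<Rightarrow> real) pmf \<Rightarrow> 'v set set \<Rightarrow> bool" where
  "PNA S \<mu> P \<longleftrightarrow> is_partition P \<and> \<Union>P \<subseteq> S \<and>
     (\<forall>T f. is_partition T \<and> coarsens T P \<and>
        (\<forall>A\<in>T. \<forall>m\<in>Mem A. f A m \<ge> 0) \<and>
        ((\<forall>A\<in>T. mono_on (Mem A) (f A)) \<or> (\<forall>A\<in>T. antimono_on' (Mem A) (f A)))
      \<longrightarrow> (\<integral>\<^sup>+ m. (\<Prod>A\<in>T. ennreal (f A (restr A m))) \<partial>measure_pmf \<mu>)
          \<le> (\<Prod>A\<in>T. \<integral>\<^sup>+ m. ennreal (f A (restr A m)) \<partial>measure_pmf \<mu>))"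

text \<open>(A,B)-NA for mu with dom(mu) = S.  Expectations of real-valued functions are
Lebesgue integrals; the inequality is required whenever the expectations involved exist
(are finite).\<close>
definition NA :: "'v set \<Rightarrow> ('v \<Rightarrow> real) pmf \<Rightarrow> 'v set \<Rightarrow> 'v set \<Rightarrow> bool" where
  "NA S \<mu> A B \<longleftrightarrow> A \<subseteq> S \<and> B \<subseteq> S \<and> A \<inter> B = {} \<and>
     (\<forall>f g. ((mono_on (Mem A) f \<and> mono_on (Mem B) g) \<or>
             (antimono_on' (Mem A) f \<and> antimono_on' (Mem B) g)) \<and>
            (bdd_below (f ` Mem A) \<or> bdd_above (f ` Mem A)) \<and>
            (bdd_below (g ` Mem B) \<or> bdd_above (g ` Mem B)) \<and>
            integrable (measure_pmf \<mu>) (\<lambda>m. f (restr A m)) \<and>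
            integrable (measure_pmf \<mu>) (\<lambda>m. g (restr B m)) \<and>
            integrable (measure_pmf \<mu>) (\<lambda>m. f (restr A m) * g (restr B m))
        \<longrightarrow> measure_pmf.expectation \<mu> (\<lambda>m. f (restr A m) * g (restr B m))
            \<le> measure_pmf.expectation \<mu> (\<lambda>m. f (restr A m)) *
              measure_pmf.expectation \<mu> (\<lambda>m. g (restr B m)))"

definition strong_NA :: "'v set \<Rightarrow> ('v \<Rightarrow> real) pmf \<Rightarrow> bool" where
  "strong_NA S \<mu> \<longleftrightarrow> (\<forall>A B. A \<subseteq> S \<and> B \<subseteq> S \<and> A \<inter> B = {} \<longrightarrow> NA S \<mu> A B)"

definition oplus_s :: "'v set \<Rightarrow> ('v \<Rightarrow> real) pmf \<Rightarrow> 'v set \<Rightarrow> ('v \<Rightarrow> real) pmf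
    \<Rightarrow> ('v \<Rightarrow> real) pmf set" where
  "oplus_s S \<mu>1 T \<mu>2 = {\<mu>. is_dist (S \<union> T) \<mu> \<and> strong_NA (S \<union> T) \<mu> \<and>
       marg S \<mu> = \<mu>1 \<and> marg T \<mu> = \<mu>2 \<and> S \<inter> T = {}}"

definition oplus_w :: "'v set \<Rightarrow> ('v \<Rightarrow> real) pmf \<Rightarrow> 'v set \<Rightarrow> ('v \<Rightarrow> real) pmf
    \<Rightarrow> ('v \<Rightarrow> real) pmf set" where
  "oplus_w S \<mu>1 T \<mu>2 = {\<mu>. is_dist (S \<union> T) \<mu> \<and> NA (S \<union> T) \<mu> S T \<and>
       marg S \<mu> = \<mu>1 \<and> marg T \<mu> = \<mu>2 \<and> S \<inter> T = {}}"

definition oplus :: "'v set \<Rightarrow> ('v \<Rightarrow> real) pmf \<Rightarrow> 'v set \<Rightarrow> ('v \<Rightarrow> real) pmf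
    \<Rightarrow> ('v \<Rightarrow> real) pmf set" where
  "oplus S \<mu>1 T \<mu>2 = (if S \<inter> T \<noteq> {} then {} else
     {\<mu>. is_dist (S \<union> T) \<mu> \<and> marg S \<mu> = \<mu>1 \<and> marg T \<mu> = \<mu>2 \<and>
         (\<forall>P Q. is_partition P \<and> \<Union>P \<subseteq> S \<and> is_partition Q \<and> \<Union>Q \<subseteq> T \<and>
                PNA S \<mu>1 P \<and> PNA T \<mu>2 Q \<longrightarrow> PNA (S \<union> T) \<mu> (P \<union> Q))})"

end

theory Submission
  imports Defs
begin

text \<open>Strong NA yields the PNA product inequality for any finite family of disjoint blocks by
induction on the number of blocks: one block A is split off and NA is applied to A and the union
of the remaining blocks, whose product of nonnegative, equally monotone factors is again monotone;
unbounded factors are handled by truncation and monotone convergence.  Conversely, singleton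
partitions are trivially PNA, so every member of the join of two distributions is
{S, T}-PNA.  For bounded functions a shift by a constant makes both factors nonnegative without
changing the covariance, which gives (S, T)-NA; integrable functions follow by truncation and
dominated convergence.\<close>

lemma restr_in_Mem [simp]: "restr A m \<in> Mem A"
  by (simp add: restr_def Mem_def)

lemma restr_mono: "x \<le> y \<Longrightarrow> restr A x \<le> restr A y"
  by (simp add: restr_def le_fun_def)

lemma restr_restr: "A \<subseteq> B \<Longrightarrow> restr A (restr B m) = restr A m"
  by (auto simp: restr_def fun_eq_iff)

lemma restr_empty: "restr {} m = (\<lambda>_. 0)"
  by (simp add: restr_def fun_eq_iff)

definition comonotone_on ::
    "'v set \<Rightarrow> 'v set \<Rightarrow> (('v \<Rightarrow> real) \<Rightarrow> real) \<Rightarrow> (('v \<Rightarrow> real) \<Rightarrow> real) \<Rightarrow> bool" where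
  "comonotone_on A B f g \<longleftrightarrow>
     (mono_on (Mem A) f \<and> mono_on (Mem B) g) \<or> (antimono_on' (Mem A) f \<and> antimono_on' (Mem B) g)"

lemma comonotone_on_comp:
  assumes "comonotone_on A B f g" "mono h" "mono k"
  shows "comonotone_on A B (\<lambda>x. h (f x)) (\<lambda>x. k (g x))"
  using assms unfolding comonotone_on_def antimono_on'_def monotone_on_def mono_def by auto

definition clip :: "nat \<Rightarrow> real \<Rightarrow> real" where
  "clip n x = max (- real n) (min x (real n))"

lemma mono_clip: "mono (clip n)"
  by (auto simp: mono_def clip_def)

lemma abs_clip_le: "\<bar>clip n x\<bar> \<le> real n"
  by (simp add: clip_def)

lemma clip_le: "clip n x \<le> real n"
  by (simp add: clip_def)

lemma abs_clip_le_abs: "\<bar>clip n x\<bar> \<le> \<bar>x\<bar>"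
  by (simp add: clip_def)

lemma clip_nonneg: "0 \<le> x \<Longrightarrow> 0 \<le> clip n x"
  by (simp add: clip_def)

lemma clip_le_self: "0 \<le> x \<Longrightarrow> clip n x \<le> x"
  by (simp add: clip_def)

lemma clip_mono_index: "0 \<le> x \<Longrightarrow> n \<le> k \<Longrightarrow> clip n x \<le> clip k x"
  by (simp add: clip_def)

lemma eventually_clip_eq: "\<forall>\<^sub>F n in sequentially. clip n x = x"
proof -
  obtain N :: nat where "\<bar>x\<bar> \<le> real N"
    using real_arch_simple by blast
  then show ?thesis
    by (intro eventually_sequentiallyI[of N]) (auto simp: clip_def)
qed

lemma clip_tendsto: "(\<lambda>n. clip n x) \<longlonglongrightarrow> x"
  using eventually_clip_eq by (rule tendsto_eventually)

lemma nn_integral_eq_expectation_bounded: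
  fixes f :: "'a \<Rightarrow> real"
  assumes "\<And>x. 0 \<le> f x" "\<And>x. f x \<le> c"
  shows "(\<integral>\<^sup>+x. ennreal (f x) \<partial>measure_pmf \<mu>) = ennreal (measure_pmf.expectation \<mu> f)"
proof (rule nn_integral_eq_integral)
  show "integrable (measure_pmf \<mu>) f"
    using assms by (intro measure_pmf.integrable_const_bound[where B=c]) auto
qed (use assms in auto)

lemma nn_integral_mult_le_iff_expectation_bounded:
  fixes f g :: "'a \<Rightarrow> real"
  assumes "\<And>x. 0 \<le> f x" "\<And>x. f x \<le> c" "\<And>x. 0 \<le> g x" "\<And>x. g x \<le> c"
  shows "(\<integral>\<^sup>+x. ennreal (f x) * ennreal (g x) \<partial>measure_pmf \<mu>)
           \<le> (\<integral>\<^sup>+x. ennreal (f x) \<partial>measure_pmf \<mu>) * (\<integral>\<^sup>+x. ennreal (g x) \<partial>measure_pmf \<mu>)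
         \<longleftrightarrow> measure_pmf.expectation \<mu> (\<lambda>x. f x * g x)
           \<le> measure_pmf.expectation \<mu> f * measure_pmf.expectation \<mu> g"
proof -
  have "(\<integral>\<^sup>+x. ennreal (f x) * ennreal (g x) \<partial>measure_pmf \<mu>)
        = (\<integral>\<^sup>+x. ennreal (f x * g x) \<partial>measure_pmf \<mu>)"
    by (simp add: assms ennreal_mult')
  also have "\<dots> = ennreal (measure_pmf.expectation \<mu> (\<lambda>x. f x * g x))"
    by (rule nn_integral_eq_expectation_bounded[where c="c * c"])
       (use assms in \<open>auto intro!: mult_mono intro: order_trans\<close>)
  finally have "(\<integral>\<^sup>+x. ennreal (f x) * ennreal (g x) \<partial>measure_pmf \<mu>)
      = ennreal (measure_pmf.expectation \<mu> (\<lambda>x. f x * g x))" .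
  moreover have "(\<integral>\<^sup>+x. ennreal (f x) \<partial>measure_pmf \<mu>) = ennreal (measure_pmf.expectation \<mu> f)"
    "(\<integral>\<^sup>+x. ennreal (g x) \<partial>measure_pmf \<mu>) = ennreal (measure_pmf.expectation \<mu> g)"
    using assms by (blast intro: nn_integral_eq_expectation_bounded)+
  moreover have "0 \<le> measure_pmf.expectation \<mu> f" "0 \<le> measure_pmf.expectation \<mu> g"
    using assms by simp_all
  ultimately show ?thesis
    by (simp add: ennreal_mult'[symmetric])
qed

lemma (in prob_space) covariance_add_const:
  fixes f g :: "'a \<Rightarrow> real"
  assumes "integrable M f" "integrable M g" "integrable M (\<lambda>x. f x * g x)"
  shows "expectation (\<lambda>x. (f x + a) * (g x + b)) - expectation (\<lambda>x. f x + a) * expectation (\<lambda>x. g x + b)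
       = expectation (\<lambda>x. f x * g x) - expectation f * expectation g"
proof -
  have "expectation (\<lambda>x. (f x + a) * (g x + b))
      = expectation (\<lambda>x. f x * g x + (b * f x + (a * g x + a * b)))"
    by (simp add: algebra_simps)
  also have "\<dots> = expectation (\<lambda>x. f x * g x) + (b * expectation f + (a * expectation g + a * b))"
    using assms by (simp add: prob_space)
  finally show ?thesis
    using assms by (simp add: prob_space algebra_simps)
qed

lemma tendsto_expectation_clip:
  fixes f :: "'a \<Rightarrow> real"
  assumes "integrable (measure_pmf \<mu>) f"
  shows "(\<lambda>n. measure_pmf.expectation \<mu> (\<lambda>x. clip n (f x))) \<longlonglongrightarrow> measure_pmf.expectation \<mu> f"
  using assms by (intro integral_dominated_convergence[where w="\<lambda>x. \<bar>f x\<bar>"])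
    (auto intro: clip_tendsto abs_clip_le_abs)

lemma tendsto_expectation_clip_mult:
  fixes f g :: "'a \<Rightarrow> real"
  assumes "integrable (measure_pmf \<mu>) (\<lambda>x. f x * g x)"
  shows "(\<lambda>n. measure_pmf.expectation \<mu> (\<lambda>x. clip n (f x) * clip n (g x)))
           \<longlonglongrightarrow> measure_pmf.expectation \<mu> (\<lambda>x. f x * g x)"
proof (rule integral_dominated_convergence[where w="\<lambda>x. \<bar>f x\<bar> * \<bar>g x\<bar>"])
  show "integrable (measure_pmf \<mu>) (\<lambda>x. \<bar>f x\<bar> * \<bar>g x\<bar>)"
    using integrable_abs[OF assms] by (simp add: abs_mult)
qed (auto simp: abs_mult intro!: mult_mono' abs_clip_le_abs tendsto_mult clip_tendsto)

lemma is_partition_iff_disjoint: "is_partition P \<longleftrightarrow> {} \<notin> P \<and> disjoint P"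
  by (auto simp: is_partition_def disjoint_def)

lemma is_partition_Un:
  assumes "is_partition P" "is_partition Q" "\<Union>P \<inter> \<Union>Q = {}"
  shows "is_partition (P \<union> Q)"
  using assms disjoint_union by (auto simp: is_partition_iff_disjoint)

lemma coarsens_refl: "coarsens P P"
  unfolding coarsens_def by (auto intro: exI[where x="{_}"])

lemma coarsens_singleton:
  assumes "is_partition \<T>" "coarsens \<T> {A}" "A \<noteq> {}"
  shows "\<T> = {A}"
proof -
  have "X = A" if "X \<in> \<T>" for X
  proof -
    obtain Q where "Q \<subseteq> {A}" "X = \<Union>Q"
      using assms(2) \<open>X \<in> \<T>\<close> unfolding coarsens_def by (meson bspec)
    moreover have "X \<noteq> {}"
      using assms(1) \<open>X \<in> \<T>\<close> unfolding is_partition_def by (elim conjE) (rule bspec)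
    ultimately show ?thesis
      by (metis Union_empty ccpo_Sup_singleton subset_singletonD)
  qed
  moreover have "\<Union>\<T> = A"
    using assms(2) by (simp add: coarsens_def)
  ultimately show ?thesis
    using assms(3) by auto
qed

lemma PNA_imp_is_partition: "PNA D \<mu> P \<Longrightarrow> is_partition P"
  and PNA_imp_Union_subset: "PNA D \<mu> P \<Longrightarrow> \<Union>P \<subseteq> D"
  by (simp_all add: PNA_def)

lemma PNA_D:
  assumes "PNA D \<mu> P" "is_partition \<T>" "coarsens \<T> P" "\<forall>A\<in>\<T>. \<forall>m\<in>Mem A. 0 \<le> f A m"
    "(\<forall>A\<in>\<T>. mono_on (Mem A) (f A)) \<or> (\<forall>A\<in>\<T>. antimono_on' (Mem A) (f A))"
  shows "(\<integral>\<^sup>+m. (\<Prod>A\<in>\<T>. ennreal (f A (restr A m))) \<partial>measure_pmf \<mu>)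
           \<le> (\<Prod>A\<in>\<T>. \<integral>\<^sup>+m. ennreal (f A (restr A m)) \<partial>measure_pmf \<mu>)"
proof -
  from assms(1) have "\<forall>\<T> f. is_partition \<T> \<and> coarsens \<T> P \<and> (\<forall>A\<in>\<T>. \<forall>m\<in>Mem A. 0 \<le> f A m) \<and>
      ((\<forall>A\<in>\<T>. mono_on (Mem A) (f A)) \<or> (\<forall>A\<in>\<T>. antimono_on' (Mem A) (f A)))
    \<longrightarrow> (\<integral>\<^sup>+m. (\<Prod>A\<in>\<T>. ennreal (f A (restr A m))) \<partial>measure_pmf \<mu>)
           \<le> (\<Prod>A\<in>\<T>. \<integral>\<^sup>+m. ennreal (f A (restr A m)) \<partial>measure_pmf \<mu>)"
    unfolding PNA_def by (elim conjE)
  then show ?thesis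
    using assms(2-) by blast
qed

lemma PNA_singleton:
  assumes "A \<noteq> {}" "A \<subseteq> S"
  shows "PNA S \<mu> {A}"
  unfolding PNA_def
proof (intro conjI allI impI)
  fix \<T> and f :: "'a set \<Rightarrow> ('a \<Rightarrow> real) \<Rightarrow> real"
  assume "is_partition \<T> \<and> coarsens \<T> {A} \<and> (\<forall>X\<in>\<T>. \<forall>m\<in>Mem X. 0 \<le> f X m) \<and>
    ((\<forall>X\<in>\<T>. mono_on (Mem X) (f X)) \<or> (\<forall>X\<in>\<T>. antimono_on' (Mem X) (f X)))"
  then have "\<T> = {A}"
    using coarsens_singleton assms(1) by blast
  then show "(\<integral>\<^sup>+m. (\<Prod>X\<in>\<T>. ennreal (f X (restr X m))) \<partial>measure_pmf \<mu>)
      \<le> (\<Prod>X\<in>\<T>. \<integral>\<^sup>+m. ennreal (f X (restr X m)) \<partial>measure_pmf \<mu>)"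
    by simp
qed (use assms in \<open>auto simp: is_partition_def\<close>)

lemma NA_expectation_mult_le_bounded:
  assumes "NA D \<mu> A B" "comonotone_on A B f g"
    and "\<And>x. \<bar>f x\<bar> \<le> c" "\<And>x. \<bar>g x\<bar> \<le> c"
  shows "measure_pmf.expectation \<mu> (\<lambda>m. f (restr A m) * g (restr B m))
           \<le> measure_pmf.expectation \<mu> (\<lambda>m. f (restr A m)) * measure_pmf.expectation \<mu> (\<lambda>m. g (restr B m))"
proof -
  have "bdd_below (f ` Mem A)" "bdd_below (g ` Mem B)"
    using assms(3,4) by (auto intro!: bdd_belowI[where m="- c"] simp: abs_le_iff minus_le_iff)
  moreover have "integrable (measure_pmf \<mu>) (\<lambda>m. f (restr A m))"
    "integrable (measure_pmf \<mu>) (\<lambda>m. g (restr B m))"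
    using assms(3,4) by (auto intro!: measure_pmf.integrable_const_bound[where B=c])
  moreover have "integrable (measure_pmf \<mu>) (\<lambda>m. f (restr A m) * g (restr B m))"
    using assms(3,4)
    by (auto intro!: measure_pmf.integrable_const_bound[where B="c * c"] simp: abs_mult mult_mono')
  ultimately show ?thesis
    using assms(1,2) unfolding NA_def comonotone_on_def by blast
qed

lemma NA_nn_integral_mult_le:
  assumes NA: "NA D \<mu> A B" and mono: "comonotone_on A B f g"
    and f_nonneg: "\<forall>m\<in>Mem A. 0 \<le> f m" and g_nonneg: "\<forall>m\<in>Mem B. 0 \<le> g m"
  shows "(\<integral>\<^sup>+m. ennreal (f (restr A m)) * ennreal (g (restr B m)) \<partial>measure_pmf \<mu>)
           \<le> (\<integral>\<^sup>+m. ennreal (f (restr A m)) \<partial>measure_pmf \<mu>) * (\<integral>\<^sup>+m. ennreal (g (restr B m)) \<partial>measure_pmf \<mu>)"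
    (is "_ \<le> ?rhs")
proof -
  define h where "h n m = ennreal (clip n (f (restr A m))) * ennreal (clip n (g (restr B m)))" for n m
  have f0: "0 \<le> f (restr A m)" and g0: "0 \<le> g (restr B m)" for m
    using f_nonneg g_nonneg by simp_all
  have bounded: "(\<integral>\<^sup>+m. h n m \<partial>measure_pmf \<mu>) \<le> ?rhs" for n
  proof -
    have "(\<integral>\<^sup>+m. h n m \<partial>measure_pmf \<mu>)
        \<le> (\<integral>\<^sup>+m. ennreal (clip n (f (restr A m))) \<partial>measure_pmf \<mu>)
          * (\<integral>\<^sup>+m. ennreal (clip n (g (restr B m))) \<partial>measure_pmf \<mu>)"
      unfolding h_def
    proof (subst nn_integral_mult_le_iff_expectation_bounded[where c="real n"])
      show "measure_pmf.expectation \<mu> (\<lambda>m. clip n (f (restr A m)) * clip n (g (restr B m)))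
          \<le> measure_pmf.expectation \<mu> (\<lambda>m. clip n (f (restr A m)))
            * measure_pmf.expectation \<mu> (\<lambda>m. clip n (g (restr B m)))"
        by (rule NA_expectation_mult_le_bounded[OF NA comonotone_on_comp[OF mono mono_clip mono_clip]])
           (rule abs_clip_le)+
    qed (use f0 g0 clip_le clip_nonneg in auto)
    also have "\<dots> \<le> ?rhs"
      using f0 g0 by (intro mult_mono nn_integral_mono) (auto intro: clip_le_self)
    finally show ?thesis .
  qed
  have "incseq h"
    using f0 g0 by (auto simp: incseq_def le_fun_def h_def intro!: mult_mono ennreal_leI clip_mono_index)
  moreover have "(SUP n. h n m) = ennreal (f (restr A m)) * ennreal (g (restr B m))" for m
  proof (rule SUP_Lim)
    show "incseq (\<lambda>n. h n m)"
      using \<open>incseq h\<close> by (auto simp: incseq_def le_fun_def)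
    have "\<forall>\<^sub>F n in sequentially. h n m = ennreal (f (restr A m)) * ennreal (g (restr B m))"
      using eventually_conj[OF eventually_clip_eq[of "f (restr A m)"] eventually_clip_eq[of "g (restr B m)"]]
      by (rule eventually_mono) (simp add: h_def)
    then show "(\<lambda>n. h n m) \<longlonglongrightarrow> ennreal (f (restr A m)) * ennreal (g (restr B m))"
      by (rule tendsto_eventually)
  qed
  ultimately have "(\<integral>\<^sup>+m. ennreal (f (restr A m)) * ennreal (g (restr B m)) \<partial>measure_pmf \<mu>)
      = (SUP n. \<integral>\<^sup>+m. h n m \<partial>measure_pmf \<mu>)"
    by (simp add: nn_integral_monotone_convergence_SUP[symmetric])
  also have "\<dots> \<le> ?rhs"
    using bounded by (rule SUP_least)
  finally show ?thesis .
qed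

lemma mono_prod_restr:
  fixes f :: "'v set \<Rightarrow> ('v \<Rightarrow> real) \<Rightarrow> real"
  assumes "\<forall>A\<in>\<T>. mono_on (Mem A) (f A)" "\<forall>A\<in>\<T>. \<forall>m\<in>Mem A. 0 \<le> f A m"
  shows "mono (\<lambda>x. \<Prod>A\<in>\<T>. f A (restr A x))"
proof (rule monoI)
  fix x y :: "'v \<Rightarrow> real"
  assume "x \<le> y"
  then show "(\<Prod>A\<in>\<T>. f A (restr A x)) \<le> (\<Prod>A\<in>\<T>. f A (restr A y))"
    using assms by (intro prod_mono) (auto simp: monotone_on_def restr_mono)
qed

lemma antimono_prod_restr:
  fixes f :: "'v set \<Rightarrow> ('v \<Rightarrow> real) \<Rightarrow> real"
  assumes "\<forall>A\<in>\<T>. antimono_on' (Mem A) (f A)" "\<forall>A\<in>\<T>. \<forall>m\<in>Mem A. 0 \<le> f A m"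
  shows "antimono (\<lambda>x. \<Prod>A\<in>\<T>. f A (restr A x))"
proof (rule antimonoI)
  fix x y :: "'v \<Rightarrow> real"
  assume "x \<le> y"
  then show "(\<Prod>A\<in>\<T>. f A (restr A y)) \<le> (\<Prod>A\<in>\<T>. f A (restr A x))"
    using assms by (intro prod_mono) (auto simp: antimono_on'_def monotone_on_def restr_mono)
qed

lemma strong_NA_nn_integral_prod_le:
  assumes sNA: "strong_NA D \<mu>" and "finite \<T>" "disjoint \<T>" "\<Union>\<T> \<subseteq> D"
    and "\<forall>A\<in>\<T>. \<forall>m\<in>Mem A. 0 \<le> f A m"
    and "(\<forall>A\<in>\<T>. mono_on (Mem A) (f A)) \<or> (\<forall>A\<in>\<T>. antimono_on' (Mem A) (f A))"
  shows "(\<integral>\<^sup>+m. (\<Prod>A\<in>\<T>. ennreal (f A (restr A m))) \<partial>measure_pmf \<mu>)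
           \<le> (\<Prod>A\<in>\<T>. \<integral>\<^sup>+m. ennreal (f A (restr A m)) \<partial>measure_pmf \<mu>)"
  using assms(2-)
proof (induction \<T> rule: finite_induct)
  case empty
  then show ?case by (simp add: measure_pmf.emeasure_space_1)
next
  case (insert A \<T>)
  define B where "B = \<Union>\<T>"
  define G where "G x = (\<Prod>A'\<in>\<T>. f A' (restr A' x))" for x
  note nonneg = insert.prems(3)
  have "A \<inter> B = {}"
    using insert.hyps(2) insert.prems(1) by (auto simp: B_def pairwise_insert disjnt_def)
  then have NA: "NA D \<mu> A B"
    using sNA insert.prems(2) unfolding strong_NA_def B_def by auto
  have G_restr: "G (restr B m) = (\<Prod>A'\<in>\<T>. f A' (restr A' m))" for m
    unfolding G_def B_def by (intro prod.cong refl) (simp add: restr_restr Union_upper)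
  have G_eq: "(\<integral>\<^sup>+m. ennreal (G (restr B m)) \<partial>measure_pmf \<mu>)
      = (\<integral>\<^sup>+m. (\<Prod>A'\<in>\<T>. ennreal (f A' (restr A' m))) \<partial>measure_pmf \<mu>)"
    using nonneg by (simp add: G_restr prod_ennreal)
  have "comonotone_on A B (f A) G"
    using insert.prems(4) nonneg mono_prod_restr[of \<T> f] antimono_prod_restr[of \<T> f]
    unfolding comonotone_on_def G_def antimono_on'_def
    by (auto simp: monotone_on_def mono_def antimono_def)
  moreover have "\<forall>m\<in>Mem B. 0 \<le> G m"
    using nonneg by (auto simp: G_def intro!: prod_nonneg)
  ultimately have "(\<integral>\<^sup>+m. ennreal (f A (restr A m)) * ennreal (G (restr B m)) \<partial>measure_pmf \<mu>)
      \<le> (\<integral>\<^sup>+m. ennreal (f A (restr A m)) \<partial>measure_pmf \<mu>) * (\<integral>\<^sup>+m. ennreal (G (restr B m)) \<partial>measure_pmf \<mu>)"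
    using nonneg by (intro NA_nn_integral_mult_le[OF NA]) auto
  also have "\<dots> \<le> (\<integral>\<^sup>+m. ennreal (f A (restr A m)) \<partial>measure_pmf \<mu>)
      * (\<Prod>A\<in>\<T>. \<integral>\<^sup>+m. ennreal (f A (restr A m)) \<partial>measure_pmf \<mu>)"
    unfolding G_eq using insert.prems by (intro mult_left_mono insert.IH) (auto simp: pairwise_insert)
  finally show ?case
    using insert.hyps nonneg by (simp add: G_restr prod_ennreal prod_nonneg)
qed

lemma strong_NA_imp_PNA:
  assumes "strong_NA D \<mu>" "is_partition P" "\<Union>P \<subseteq> D"
  shows "PNA D \<mu> P"
  unfolding PNA_def
proof (intro conjI allI impI)
  fix \<T> f
  assume h: "is_partition \<T> \<and> coarsens \<T> P \<and> (\<forall>A\<in>\<T>. \<forall>m\<in>Mem A. 0 \<le> f A m) \<and>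
    ((\<forall>A\<in>\<T>. mono_on (Mem A) (f A)) \<or> (\<forall>A\<in>\<T>. antimono_on' (Mem A) (f A)))"
  show "(\<integral>\<^sup>+m. (\<Prod>A\<in>\<T>. ennreal (f A (restr A m))) \<partial>measure_pmf \<mu>)
          \<le> (\<Prod>A\<in>\<T>. \<integral>\<^sup>+m. ennreal (f A (restr A m)) \<partial>measure_pmf \<mu>)"
  proof (cases "finite \<T>")
    case True
    then show ?thesis
      using h assms
      by (intro strong_NA_nn_integral_prod_le) (auto simp: coarsens_def is_partition_iff_disjoint)
  next
    case False
    \<comment> \<open>Products over infinite sets are 1 by convention.\<close>
    then show ?thesis
      by (simp add: measure_pmf.emeasure_space_1)
  qed
qed (use assms in auto)

lemma oplus_s_subset_oplus: "oplus_s S \<mu>1 T \<mu>2 \<subseteq> oplus S \<mu>1 T \<mu>2"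
proof
  fix \<mu>
  assume "\<mu> \<in> oplus_s S \<mu>1 T \<mu>2"
  then have sNA: "strong_NA (S \<union> T) \<mu>" and "S \<inter> T = {}"
    by (simp_all add: oplus_s_def)
  have "PNA (S \<union> T) \<mu> (P \<union> Q)"
    if "is_partition P" "\<Union>P \<subseteq> S" "is_partition Q" "\<Union>Q \<subseteq> T" for P Q
    using that \<open>S \<inter> T = {}\<close> by (intro strong_NA_imp_PNA[OF sNA] is_partition_Un) auto
  with \<open>\<mu> \<in> oplus_s S \<mu>1 T \<mu>2\<close> show "\<mu> \<in> oplus S \<mu>1 T \<mu>2"
    by (simp add: oplus_s_def oplus_def)
qed

lemma PNA_pair_nn_integral_mult_le:
  assumes "PNA D \<mu> {A, B}" "A \<noteq> B" "comonotone_on A B f g"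
    and "\<forall>m\<in>Mem A. 0 \<le> f m" "\<forall>m\<in>Mem B. 0 \<le> g m"
  shows "(\<integral>\<^sup>+m. ennreal (f (restr A m)) * ennreal (g (restr B m)) \<partial>measure_pmf \<mu>)
           \<le> (\<integral>\<^sup>+m. ennreal (f (restr A m)) \<partial>measure_pmf \<mu>) * (\<integral>\<^sup>+m. ennreal (g (restr B m)) \<partial>measure_pmf \<mu>)"
proof -
  define h where "h X = (if X = A then f else g)" for X
  have "is_partition {A, B}"
    using assms(1) by (rule PNA_imp_is_partition)
  moreover have "(\<forall>X\<in>{A, B}. mono_on (Mem X) (h X)) \<or> (\<forall>X\<in>{A, B}. antimono_on' (Mem X) (h X))"
    using assms(2,3) unfolding h_def comonotone_on_def by auto
  moreover have "\<forall>X\<in>{A, B}. \<forall>m\<in>Mem X. 0 \<le> h X m"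
    using assms(2,4,5) unfolding h_def by auto
  ultimately have "(\<integral>\<^sup>+m. (\<Prod>X\<in>{A, B}. ennreal (h X (restr X m))) \<partial>measure_pmf \<mu>)
      \<le> (\<Prod>X\<in>{A, B}. \<integral>\<^sup>+m. ennreal (h X (restr X m)) \<partial>measure_pmf \<mu>)"
    using assms(1) coarsens_refl by (intro PNA_D)
  then show ?thesis
    using assms(2) by (simp add: h_def)
qed

lemma PNA_pair_expectation_mult_le_bounded:
  assumes "PNA D \<mu> {A, B}" "A \<noteq> B" "comonotone_on A B f g"
    and f_bound: "\<And>x. \<bar>f x\<bar> \<le> c" and g_bound: "\<And>x. \<bar>g x\<bar> \<le> c"
  shows "measure_pmf.expectation \<mu> (\<lambda>m. f (restr A m) * g (restr B m))
           \<le> measure_pmf.expectation \<mu> (\<lambda>m. f (restr A m)) * measure_pmf.expectation \<mu> (\<lambda>m. g (restr B m))"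
proof -
  let ?F = "\<lambda>m. f (restr A m) + c" and ?G = "\<lambda>m. g (restr B m) + c"
  have f_shift: "0 \<le> f x + c" "f x + c \<le> 2 * c" and g_shift: "0 \<le> g x + c" "g x + c \<le> 2 * c" for x
    using f_bound[of x] g_bound[of x] by (simp_all add: abs_le_iff)
  have "comonotone_on A B (\<lambda>x. f x + c) (\<lambda>x. g x + c)"
    using assms(3) by (rule comonotone_on_comp) (simp_all add: mono_def)
  then have "(\<integral>\<^sup>+m. ennreal (?F m) * ennreal (?G m) \<partial>measure_pmf \<mu>)
      \<le> (\<integral>\<^sup>+m. ennreal (?F m) \<partial>measure_pmf \<mu>) * (\<integral>\<^sup>+m. ennreal (?G m) \<partial>measure_pmf \<mu>)"
    using f_shift(1) g_shift(1) by (intro PNA_pair_nn_integral_mult_le[OF assms(1,2)]) auto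
  then have "measure_pmf.expectation \<mu> (\<lambda>m. ?F m * ?G m)
      \<le> measure_pmf.expectation \<mu> ?F * measure_pmf.expectation \<mu> ?G"
    by (subst (asm) nn_integral_mult_le_iff_expectation_bounded[where c="2 * c"])
       (use f_shift g_shift in auto)
  moreover have "measure_pmf.expectation \<mu> (\<lambda>m. ?F m * ?G m)
      - measure_pmf.expectation \<mu> ?F * measure_pmf.expectation \<mu> ?G
      = measure_pmf.expectation \<mu> (\<lambda>m. f (restr A m) * g (restr B m))
      - measure_pmf.expectation \<mu> (\<lambda>m. f (restr A m)) * measure_pmf.expectation \<mu> (\<lambda>m. g (restr B m))"
  proof (rule measure_pmf.covariance_add_const)
    show "integrable (measure_pmf \<mu>) (\<lambda>m. f (restr A m))" "integrable (measure_pmf \<mu>) (\<lambda>m. g (restr B m))"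
      using f_bound g_bound by (auto intro!: measure_pmf.integrable_const_bound[where B=c])
    show "integrable (measure_pmf \<mu>) (\<lambda>m. f (restr A m) * g (restr B m))"
      using f_bound g_bound
      by (auto intro!: measure_pmf.integrable_const_bound[where B="c * c"] simp: abs_mult mult_mono')
  qed
  ultimately show ?thesis
    by linarith
qed

lemma PNA_pair_imp_NA:
  assumes PNA: "PNA D \<mu> {A, B}" and disj: "A \<inter> B = {}"
  shows "NA D \<mu> A B"
  unfolding NA_def
proof (intro conjI allI impI)
  show "A \<subseteq> D" "B \<subseteq> D" "A \<inter> B = {}"
    using PNA_imp_Union_subset[OF PNA] disj by simp_all
  have "A \<noteq> B"
    using PNA_imp_is_partition[OF PNA] disj unfolding is_partition_def by auto
  fix f g :: "('a \<Rightarrow> real) \<Rightarrow> real"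
  assume "((mono_on (Mem A) f \<and> mono_on (Mem B) g) \<or> (antimono_on' (Mem A) f \<and> antimono_on' (Mem B) g)) \<and>
    (bdd_below (f ` Mem A) \<or> bdd_above (f ` Mem A)) \<and> (bdd_below (g ` Mem B) \<or> bdd_above (g ` Mem B)) \<and>
    integrable (measure_pmf \<mu>) (\<lambda>m. f (restr A m)) \<and> integrable (measure_pmf \<mu>) (\<lambda>m. g (restr B m)) \<and>
    integrable (measure_pmf \<mu>) (\<lambda>m. f (restr A m) * g (restr B m))"
  then have mono: "comonotone_on A B f g"
    and "integrable (measure_pmf \<mu>) (\<lambda>m. f (restr A m))" "integrable (measure_pmf \<mu>) (\<lambda>m. g (restr B m))"
    and "integrable (measure_pmf \<mu>) (\<lambda>m. f (restr A m) * g (restr B m))"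
    by (simp_all add: comonotone_on_def)
  then show "measure_pmf.expectation \<mu> (\<lambda>m. f (restr A m) * g (restr B m))
      \<le> measure_pmf.expectation \<mu> (\<lambda>m. f (restr A m)) * measure_pmf.expectation \<mu> (\<lambda>m. g (restr B m))"
  proof (intro LIMSEQ_le[OF tendsto_expectation_clip_mult
        tendsto_mult[OF tendsto_expectation_clip tendsto_expectation_clip]])
    show "\<exists>N. \<forall>n\<ge>N. measure_pmf.expectation \<mu> (\<lambda>m. clip n (f (restr A m)) * clip n (g (restr B m)))
        \<le> measure_pmf.expectation \<mu> (\<lambda>m. clip n (f (restr A m)))
          * measure_pmf.expectation \<mu> (\<lambda>m. clip n (g (restr B m)))"
      using PNA_pair_expectation_mult_le_bounded[OF PNA \<open>A \<noteq> B\<close>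
          comonotone_on_comp[OF mono mono_clip mono_clip] abs_clip_le abs_clip_le]
      by blast
  qed
qed

lemma NA_empty_left: "B \<subseteq> D \<Longrightarrow> NA D \<mu> {} B"
  by (simp add: NA_def restr_empty)

lemma NA_empty_right: "A \<subseteq> D \<Longrightarrow> NA D \<mu> A {}"
  by (simp add: NA_def restr_empty)

lemma oplus_subset_oplus_w: "oplus S \<mu>1 T \<mu>2 \<subseteq> oplus_w S \<mu>1 T \<mu>2"
proof
  fix \<mu>
  assume \<mu>: "\<mu> \<in> oplus S \<mu>1 T \<mu>2"
  then have disj: "S \<inter> T = {}"
    by (cases "S \<inter> T = {}") (simp_all add: oplus_def)
  have PNA_Un: "PNA (S \<union> T) \<mu> (P \<union> Q)"
    if "is_partition P" "\<Union>P \<subseteq> S" "is_partition Q" "\<Union>Q \<subseteq> T" "PNA S \<mu>1 P" "PNA T \<mu>2 Q" for P Q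
    using \<mu> disj that by (simp add: oplus_def)
  have "NA (S \<union> T) \<mu> S T"
  proof (cases "S = {} \<or> T = {}")
    case True
    then show ?thesis
      using NA_empty_left[of T "S \<union> T" \<mu>] NA_empty_right[of S "S \<union> T" \<mu>] by auto
  next
    case False
    then have "PNA (S \<union> T) \<mu> ({S} \<union> {T})"
      by (intro PNA_Un PNA_singleton) (simp_all add: is_partition_def)
    then have "PNA (S \<union> T) \<mu> {S, T}"
      by (simp add: insert_commute)
    then show ?thesis
      using disj by (rule PNA_pair_imp_NA)
  qed
  with \<mu> disj show "\<mu> \<in> oplus_w S \<mu>1 T \<mu>2"
    by (simp add: oplus_def oplus_w_def)
qed

theorem mainTheorem5:
  fixes S T :: "'v set" and \<mu>1 \<mu>2 :: "('v \<Rightarrow> real) pmf"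
  assumes "is_dist S \<mu>1" and "is_dist T \<mu>2"
  shows "oplus_s S \<mu>1 T \<mu>2 \<subseteq> oplus S \<mu>1 T \<mu>2 \<and> oplus S \<mu>1 T \<mu>2 \<subseteq> oplus_w S \<mu>1 T \<mu>2"
  \<comment> \<open>Both inclusions hold for arbitrary distributions.\<close>
  using oplus_s_subset_oplus oplus_subset_oplus_w by blast

end
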